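(* Let $s\ge 3$ and $1\le i\le s-1$, and put $J=\lfloor (s-i+1)/2\rfloor$. Then for all $0\le j\le J$ we have $|\lambda_{i,j}|\le|\lambda_{i,J}|$, with equality if and only if either $j=J$, or $s$ is odd, $i=1$ and $j=0$.
   Context: $|\mu|$ denotes the size (sum of parts) of a partition $\mu$. For a finite set $\{h_1>h_2>\cdots>h_m\}$ of positive integers, the unique partition with this $\beta$-set (set of first-column hook lengths) is $(h_1-(m-1),h_2-(m-2),\ldots,h_m)$, of size $\sum_i h_i-\binom{m}{2}$. For $s\ge 3$, $1\le i\le s-1$, define $\beta_{i,0}=\bigcup_{k\ge 0}\{i+1+k(s+2),\ldots,(k+1)s-1\}$ (empty intervals omitted), and for $1\le j\le\lfloor(s-i+1)/2\rfloor$ define $\beta_{i,j}=\beta_{i,0}\cup\{i+p(s+2): 0\le p\le j-1\}$. Let $\lambda_{i,j}$ be the unique partition whose $\beta$-set is $\beta_{i,j}$. *)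

theory Defs
  imports Main
begin

text \<open>The partition with a given finite beta-set H of positive integers
  {h_1 > ... > h_m} is (h_1-(m-1), h_2-(m-2), ..., h_m), listed in weakly
  decreasing order.\<close>
definition partition_of_beta :: "nat set \<Rightarrow> nat list" where
  "partition_of_beta H =
     (let xs = sorted_list_of_set H
      in rev (map (\<lambda>k. xs ! k - k) [0..<length xs]))"

definition partition_size :: "nat list \<Rightarrow> nat" where
  "partition_size \<mu> = sum_list \<mu>"

definition beta0 :: "nat \<Rightarrow> nat \<Rightarrow> nat set" where
  "beta0 s i = (\<Union>k. {i + 1 + k * (s + 2) .. (k + 1) * s - 1})"

definition beta :: "nat \<Rightarrow> nat \<Rightarrow> nat \<Rightarrow> nat set" where
  "beta s i j = beta0 s i \<union> {i + p * (s + 2) | p. p < j}"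

definition lam :: "nat \<Rightarrow> nat \<Rightarrow> nat \<Rightarrow> nat list" where
  "lam s i j = partition_of_beta (beta s i j)"

end

theory Submission imports Defs begin

(* The size of the partition with a finite beta-set H of m elements is
   sum(H) - m(m-1)/2.  For beta_{i,j} we compute both ingredients: beta_{i,0}
   is a disjoint union of K = (s-i) div 2 nonempty integer intervals ("blocks"),
   of total cardinality c = K(s-i) - K^2, and beta_{i,j} adds the j points
   i + p(s+2), p < j, none of which lies in a block.  Hence 2|lambda_{i,j}| is a
   quadratic polynomial in j, and for any j, J
       2|lambda_{i,J}| - 2|lambda_{i,j}| = (J - j) (2(i - c) + (s+1)(J + j - 1)).
   For J = (s-i+1) div 2 the second factor is at least its value at j = 0,
   which by a parity case analysis on s - i is nonnegative, and vanishes
   exactly when i = 1 and s is odd. *)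

lemma double_sum_lessThan: "2 * (\<Sum>k<n. k) = n * (n - 1 :: nat)"
proof (induction n)
  case (Suc n) then show ?case by (cases n) (auto simp: algebra_simps)
qed simp

text \<open>Size of a partition via its beta-set: the k-th smallest element h_k
  contributes h_k - k, and the subtracted indices sum to m(m-1)/2.\<close>
lemma partition_size_of_beta:
  assumes "finite H"
  shows "2 * partition_size (partition_of_beta H) + card H * (card H - 1) = 2 * \<Sum>H"
proof -
  define xs where "xs = sorted_list_of_set H"
  have sorted: "sorted_wrt (<) xs" unfolding xs_def by (rule strict_sorted_list_of_set)
  have len: "length xs = card H" unfolding xs_def by simp
  have size: "partition_size (partition_of_beta H) = (\<Sum>k<length xs. xs!k - k)"
    unfolding partition_size_def partition_of_beta_def Let_def xs_def[symmetric]
    by (simp add: interv_sum_list_conv_sum_set_nat atLeast0LessThan)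
  have "(\<Sum>k<length xs. xs!k - k) + (\<Sum>k<length xs. k) = (\<Sum>k<length xs. xs!k)"
    unfolding sum.distrib[symmetric]
    by (rule sum.cong) (auto simp: sorted_wrt_less_idx[OF sorted])
  also have "\<dots> = \<Sum>H"
    using sum_list_sum_nth[of xs] distinct_sum_list_conv_Sum[of xs] assms
    by (simp add: xs_def atLeast0LessThan)
  finally show ?thesis
    using size len double_sum_lessThan[of "length xs"] by (metis add_mult_distrib2)
qed

definition beta_block :: "nat \<Rightarrow> nat \<Rightarrow> nat \<Rightarrow> nat set" where
  "beta_block s i k = {i + 1 + k * (s + 2) .. (k + 1) * s - 1}"

lemma beta0_as_blocks: "beta0 s i = (\<Union>k. beta_block s i k)"
  by (simp add: beta0_def beta_block_def)

lemma beta_block_empty: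
  assumes "(s - i) div 2 \<le> k"
  shows "beta_block s i k = {}"
proof -
  have "s \<le> i + 2 * k + 1" using assms by linarith
  then have "(k + 1) * s \<le> i + 1 + k * (s + 2)" by (simp add: algebra_simps)
  then show ?thesis unfolding beta_block_def by auto
qed

lemma beta_block_disjoint:
  assumes "k < l"
  shows "beta_block s i k \<inter> beta_block s i l = {}"
proof -
  have "(k + 1) * s \<le> l * s" using assms by (intro mult_le_mono1) simp
  then have "(k + 1) * s - 1 < i + 1 + l * (s + 2)" by (simp add: algebra_simps)
  then show ?thesis unfolding beta_block_def by auto
qed

lemma card_beta_block:
  assumes "k < (s - i) div 2"
  shows "card (beta_block s i k) = s - i - 1 - 2 * k"
proof -
  have "2 * k + 2 \<le> s - i" using assms by linarith
  then have "(k + 1) * s = k * s + s" "s \<ge> i + 2 + 2 * k" by (simp_all add: algebra_simps)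
  then show ?thesis unfolding beta_block_def by (simp add: algebra_simps)
qed

lemma beta0_finite_blocks: "beta0 s i = (\<Union>k<(s - i) div 2. beta_block s i k)"
proof -
  have "beta_block s i k = {}" if "k \<notin> {..<(s - i) div 2}" for k
    using that beta_block_empty by simp
  then show ?thesis unfolding beta0_as_blocks by blast
qed

lemma sum_step_two:
  "2 * K \<le> n + 1 \<Longrightarrow> (\<Sum>k<K. n - 1 - 2 * k) + K * K = K * (n :: nat)"
proof (induction K)
  case (Suc K)
  then have "(\<Sum>k<K. n - 1 - 2 * k) + K * K = K * n" by simp
  moreover have "n - 1 - 2 * K + 2 * K + 1 = n" using Suc.prems by simp
  ultimately show ?case by (simp add: algebra_simps)
qed simp

lemma finite_beta0: "finite (beta0 s i)"
  unfolding beta0_finite_blocks beta_block_def by auto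

lemma card_beta0:
  "card (beta0 s i) + ((s - i) div 2)^2 = (s - i) div 2 * (s - i)"
proof -
  define K where "K = (s - i) div 2"
  have "card (beta0 s i) = (\<Sum>k<K. card (beta_block s i k))"
    unfolding beta0_finite_blocks K_def[symmetric]
  proof (rule card_UN_disjoint)
    show "\<forall>k\<in>{..<K}. \<forall>l\<in>{..<K}. k \<noteq> l \<longrightarrow> beta_block s i k \<inter> beta_block s i l = {}"
      using beta_block_disjoint by (metis Int_commute nat_neq_iff)
  qed (auto simp: beta_block_def)
  also have "\<dots> = (\<Sum>k<K. s - i - 1 - 2 * k)"
    using card_beta_block by (simp add: K_def)
  finally show ?thesis
    using sum_step_two[of K "s - i"] by (simp add: K_def power2_eq_square)
qed

lemma extra_point_notin_block:
  assumes "1 \<le> i"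
  shows "i + p * (s + 2) \<notin> beta_block s i k"
proof (cases "k < p")
  case True
  then have "(k + 1) * s \<le> p * s" by (intro mult_le_mono1) simp
  moreover have "p * s \<le> p * (s + 2)" by simp
  ultimately have "(k + 1) * s - 1 < i + p * (s + 2)" using assms by linarith
  then show ?thesis unfolding beta_block_def by simp
next
  case False
  then have "p * (s + 2) \<le> k * (s + 2)" by (intro mult_le_mono1) simp
  then show ?thesis unfolding beta_block_def by simp
qed

lemma inj_extra_points: "inj_on (\<lambda>p. i + p * (s + 2 :: nat)) A"
  by (rule inj_onI) (simp only: add_left_cancel mult_cancel2, simp)

lemma beta_disjoint_union:
  assumes "1 \<le> i"
  shows "beta s i j = beta0 s i \<union> (\<lambda>p. i + p * (s + 2)) ` {..<j}"
    and "beta0 s i \<inter> (\<lambda>p. i + p * (s + 2)) ` {..<j} = {}"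
  using extra_point_notin_block[OF assms] by (auto simp: beta_def beta0_as_blocks)

lemma finite_beta: "finite (beta s i j)"
  unfolding beta_def using finite_beta0 by auto

lemma card_beta: "1 \<le> i \<Longrightarrow> card (beta s i j) = card (beta0 s i) + j"
  using beta_disjoint_union[of i s j] finite_beta0[of s i]
  by (simp only: card_Un_disjoint finite_imageI finite_lessThan
      card_image[OF inj_extra_points] card_lessThan)

lemma double_sum_beta:
  assumes "1 \<le> i"
  shows "2 * \<Sum>(beta s i j) = 2 * \<Sum>(beta0 s i) + 2 * j * i + j * (j - 1) * (s + 2)"
proof -
  have "\<Sum>(beta s i j) = \<Sum>(beta0 s i) + (\<Sum>p<j. i + p * (s + 2))"
    using beta_disjoint_union[OF assms, where j = j] finite_beta0[of s i]
    by (simp only: sum.union_disjoint finite_imageI finite_lessThan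
      sum.reindex[OF inj_extra_points] comp_def)
  also have "(\<Sum>p<j. i + p * (s + 2)) = j * i + (\<Sum>p<j. p) * (s + 2)"
    by (simp add: sum.distrib sum_distrib_right)
  finally have "2 * \<Sum>(beta s i j)
      = 2 * \<Sum>(beta0 s i) + 2 * j * i + (2 * (\<Sum>p<j. p)) * (s + 2)"
    by (simp add: algebra_simps)
  then show ?thesis unfolding double_sum_lessThan .
qed

lemma of_nat_mult_pred: "int (n * (n - 1)) = int n * (int n - 1)"
  by (cases n) (auto simp: algebra_simps)

lemma double_lam_size:
  fixes s i j :: nat
  assumes "1 \<le> i"
  defines "c \<equiv> int (card (beta0 s i))"
  shows "2 * int (partition_size (lam s i j)) =
    2 * int (\<Sum>(beta0 s i)) - c * (c - 1) + 2 * int j * (int i - c)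
      + (int s + 1) * int j * (int j - 1)"
proof -
  have "2 * partition_size (lam s i j) + (card (beta0 s i) + j) * (card (beta0 s i) + j - 1)
      = 2 * \<Sum>(beta0 s i) + 2 * j * i + j * (j - 1) * (s + 2)"
    using partition_size_of_beta[OF finite_beta[of s i j]]
    unfolding card_beta[OF assms(1)] double_sum_beta[OF assms(1)] lam_def .
  then have "2 * int (partition_size (lam s i j)) + int ((card (beta0 s i) + j) * (card (beta0 s i) + j - 1))
      = 2 * int (\<Sum>(beta0 s i)) + 2 * int j * int i + int (j * (j - 1)) * (int s + 2)"
    by (metis (mono_tags, lifting) of_nat_add of_nat_mult of_nat_numeral)
  then show ?thesis
    unfolding of_nat_mult_pred c_def by (simp add: algebra_simps)
qed

lemma lam_size_difference:
  fixes s i j J :: nat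
  assumes "1 \<le> i"
  defines "c \<equiv> int (card (beta0 s i))"
  shows "2 * int (partition_size (lam s i J)) - 2 * int (partition_size (lam s i j)) =
    (int J - int j) * (2 * (int i - c) + (int s + 1) * (int J + int j - 1))"
  unfolding double_lam_size[OF assms(1)] c_def by (simp add: algebra_simps)

lemma extremal_weight:
  fixes s i :: nat
  assumes "1 \<le> i" "i < s"
  defines "c \<equiv> int (card (beta0 s i))" and "J \<equiv> (s - i + 1) div 2"
  defines "w \<equiv> 2 * (int i - c) + (int s + 1) * (int J - 1)"
  shows "0 \<le> w \<and> (w = 0 \<longleftrightarrow> i = 1 \<and> odd s)"
proof (cases "even (s - i)")
  case True
  then obtain n where n: "s - i = 2 * n" by blast
  have "c = int n * int n"
    using card_beta0[of s i] unfolding c_def n by (simp add: power2_eq_square)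
  moreover have "int s = int i + 2 * int n" "J = n" using n assms(2) unfolding J_def by auto
  ultimately have "w = (int i - 1) * (int n + 1)" unfolding w_def by (simp add: algebra_simps)
  moreover have "i = 1 \<Longrightarrow> odd s" using n assms(2) by presburger
  ultimately show ?thesis using assms(1) by auto
next
  case False
  then obtain n where n: "s - i = 2 * n + 1" by (metis oddE)
  have "c = int n * int n + int n"
    using card_beta0[of s i] unfolding c_def n by (simp add: power2_eq_square algebra_simps)
  moreover have "int s = int i + 2 * int n + 1" "J = n + 1" using n assms(2) unfolding J_def by auto
  ultimately have "w = int i * (int n + 2)" unfolding w_def by (simp add: algebra_simps)
  moreover have "i = 1 \<Longrightarrow> even s" using n assms(2) by presburger
  ultimately show ?thesis using assms(1) by simp
qed

theorem lemma3p3: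
  fixes s i j :: nat
  assumes "s \<ge> 3" and "1 \<le> i" and "i \<le> s - 1"
    and "j \<le> (s - i + 1) div 2"
  shows "partition_size (lam s i j) \<le> partition_size (lam s i ((s - i + 1) div 2))
    \<and> (partition_size (lam s i j) = partition_size (lam s i ((s - i + 1) div 2))
         \<longleftrightarrow> (j = (s - i + 1) div 2 \<or> (odd s \<and> i = 1 \<and> j = 0)))"
proof -
  define J where "J = (s - i + 1) div 2"
  define w where "w = 2 * (int i - int (card (beta0 s i))) + (int s + 1) * (int J - 1)"
  have w: "0 \<le> w \<and> (w = 0 \<longleftrightarrow> i = 1 \<and> odd s)"
    using extremal_weight[of i s] assms unfolding w_def J_def by simp
  have diff: "2 * int (partition_size (lam s i J)) - 2 * int (partition_size (lam s i j))
      = (int J - int j) * (w + (int s + 1) * int j)"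
    unfolding lam_size_difference[OF assms(2)] w_def by (simp add: algebra_simps)
  have "j \<le> J" using assms(4) unfolding J_def .
  moreover have "0 \<le> w + (int s + 1) * int j" using w by simp
  ultimately have "0 \<le> (int J - int j) * (w + (int s + 1) * int j)" by simp
  moreover have "(int J - int j) * (w + (int s + 1) * int j) = 0 \<longleftrightarrow> j = J \<or> (w = 0 \<and> j = 0)"
    using w by (auto simp: add_nonneg_eq_0_iff)
  ultimately show ?thesis
    using diff w unfolding J_def[symmetric] by auto
qed

end
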